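(* Consider the distributed energy beamforming setting and protocol described in the context, with $M\ge 2$ energy transmitters, channel power gains $\beta_1,\dots,\beta_M>0$, channel phases $\theta_1,\dots,\theta_M\in[-\pi,\pi)$, transmit power $P>0$, and $N\ge1$ feedback intervals per transmitter, and let $\eta=Q_{\mathrm d}/Q^\star$ be the resulting efficiency. Let $0<\hat\eta\le 1$ be a target efficiency. If $$N\ \ge\ \log_2\left(\frac{\pi}{\arccos\left(\sqrt{\hat\eta-\dfrac{(1-\hat\eta)\sum_{m=1}^M\beta_m}{\sum_{i,j=1,\,i\ne j}^M\sqrt{\beta_i\beta_j}}}\right)}\right),$$ then $\eta\ge\hat\eta$.
   Context: Setting: $M$ single-antenna energy transmitters ET$_1,\dots,$ET$_M$ send power to one energy receiver (ER). If ET$_m$ transmits with phase $\phi_m$ (each with power $P$), the harvested power at the ER is $Q(\phi_1,\dots,\phi_M)=P\big|\sum_{m}\sqrt{\beta_m}e^{\mathrm{i}(\phi_m-\theta_m)}\big|^2$, where idle transmitters contribute nothing; the phases $\theta_m$ are unknown to the transmitters. Protocol: ET$_1$ transmits with fixed phase $\bar\phi_1=0$. Then for $m=2,\dots,M$ in turn, with ET$_1,\dots,$ET$_{m-1}$ transmitting with fixed phases $\bar\phi_1,\dots,\bar\phi_{m-1}$ and the others idle, ET$_m$ runs algorithm (A1) below and thereafter transmits with the resulting phase $\bar\phi_m$. Here $Q_m(\phi)=P\big|\sqrt{\beta_m}e^{\mathrm{i}(\phi-\theta_m)}+\sum_{i=1}^{m-1}\sqrt{\beta_i}e^{\mathrm{i}(\bar\phi_i-\theta_i)}\big|^2$.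 Algorithm (A1) for ET$_m$: initialize $\mathcal A^{(1)}=[-\pi,\pi)$, $\psi=0$, $\psi'=-\pi$. For $n=1,\dots,N$: ET$_m$ transmits with phase $\psi$ and then $\psi'$; the ER feeds back one bit indicating whether $Q_m(\psi)>Q_m(\psi')$ (exact measurements). If $Q_m(\psi)>Q_m(\psi')$, set $\mathcal A^{(n+1)}=\mathcal A^{(n)}\setminus\{\theta\in[-\pi,\pi):\cos(\theta-\psi)<\cos(\theta-\psi')\}$, otherwise $\mathcal A^{(n+1)}=\mathcal A^{(n)}\setminus\{\theta\in[-\pi,\pi):\cos(\theta-\psi)>\cos(\theta-\psi')\}$; then set $\psi=\max_{\theta\in\mathcal A^{(n+1)}}\theta$, $\psi'=\min_{\theta\in\mathcal A^{(n+1)}}\theta$. Output $\bar\phi_m=(\psi+\psi')/2$. Finally $Q_{\mathrm d}=Q(\bar\phi_1,\dots,\bar\phi_M)$, $Q^\star=P\big(\sum_{m}\sqrt{\beta_m}\big)^2=P\big(\sum_m\beta_m+\sum_{i\ne j}\sqrt{\beta_i\beta_j}\big)$, and $\eta=Q_{\mathrm d}/Q^\star$. The right-hand side of the condition on $N$ is understood whenever it is well defined (the expression under the square root lies in $[0,1]$). *)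

theory Defs
  imports Complex_Main
begin

definition Qm :: "(nat \<Rightarrow> real) \<Rightarrow> (nat \<Rightarrow> real) \<Rightarrow> real \<Rightarrow> (nat \<Rightarrow> real) \<Rightarrow> nat \<Rightarrow> real \<Rightarrow> real" where
  "Qm beta theta P ph m phi =
     P * (cmod (complex_of_real (sqrt (beta m)) * cis (phi - theta m)
               + (\<Sum>i\<in>{1..<m}. complex_of_real (sqrt (beta i)) * cis (ph i - theta i)))) ^ 2"

text \<open>Endpoints (max, min) of a set of phases in [-pi,pi), read as a closed arc of the circle:
  the arc goes counterclockwise from the min psi' to the max psi.  When the set is an ordinary
  closed interval inside [-pi,pi) these are its literal max and min.\<close>
definition arc_ends :: "real set \<Rightarrow> real \<times> real" where
  "arc_ends A = (THE (b, a). -pi \<le> a \<and> a < pi \<and> a \<le> b \<and> b < a + 2 * pi \<and>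
      A = {t \<in> {-pi..<pi}. \<exists>k::int. a \<le> t + 2 * pi * of_int k \<and> t + 2 * pi * of_int k \<le> b})"

definition a1_step :: "(real \<Rightarrow> real) \<Rightarrow> real set \<times> real \<times> real \<Rightarrow> real set \<times> real \<times> real" where
  "a1_step f s = (case s of (A, psi, psi') \<Rightarrow>
     let A' = (if f psi > f psi'
               then A - {t \<in> {-pi..<pi}. cos (t - psi) < cos (t - psi')}
               else A - {t \<in> {-pi..<pi}. cos (t - psi) > cos (t - psi')})
     in (A', fst (arc_ends A'), snd (arc_ends A')))"

definition a1_output :: "nat \<Rightarrow> (real \<Rightarrow> real) \<Rightarrow> real" where
  "a1_output N f = (case (a1_step f ^^ N) ({-pi..<pi}, 0, -pi) of (A, psi, psi') \<Rightarrow> (psi + psi') / 2)"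

fun phases :: "(nat \<Rightarrow> real) \<Rightarrow> (nat \<Rightarrow> real) \<Rightarrow> real \<Rightarrow> nat \<Rightarrow> nat \<Rightarrow> (nat \<Rightarrow> real)" where
  "phases beta theta P N 0 = (\<lambda>_. 0)"
| "phases beta theta P N (Suc m) =
     (let ph = phases beta theta P N m in
      if m = 0 then ph(1 := 0)
      else ph(Suc m := a1_output N (Qm beta theta P ph (Suc m))))"

definition Qd :: "nat \<Rightarrow> (nat \<Rightarrow> real) \<Rightarrow> (nat \<Rightarrow> real) \<Rightarrow> real \<Rightarrow> nat \<Rightarrow> real" where
  "Qd M beta theta P N =
     P * (cmod (\<Sum>m\<in>{1..M}. complex_of_real (sqrt (beta m)) * cis (phases beta theta P N M m - theta m))) ^ 2"

definition Qstar :: "nat \<Rightarrow> (nat \<Rightarrow> real) \<Rightarrow> real \<Rightarrow> real" where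
  "Qstar M beta P = P * (\<Sum>m\<in>{1..M}. sqrt (beta m)) ^ 2"

definition eta :: "nat \<Rightarrow> (nat \<Rightarrow> real) \<Rightarrow> (nat \<Rightarrow> real) \<Rightarrow> real \<Rightarrow> nat \<Rightarrow> real" where
  "eta M beta theta P N = Qd M beta theta P N / Qstar M beta P"

end

theory Submission
  imports Defs
begin

text \<open>After its first comparison, algorithm (A1) always holds an arc [a, a + L] of the circle
  together with its two endpoints.  Its objective Q_m has the form alpha + kappa cos (phi - p) with
  kappa > 0, where p is the phase that aligns ET_m with the sum S of the already fixed signals, so
  each one-bit comparison of the endpoints keeps exactly the half of the arc that contains p.
  After N rounds the output, the midpoint of an arc of length pi / 2^(N-1), lies within
  pi / 2^N of p, hence cos (phi_m - p) \<ge> c := cos (pi / 2^N).  Adding ET_m then preserves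
  |S|^2 \<ge> T + c^2 (B^2 - T), where T and B are the partial sums of beta_m and sqrt beta_m;
  with B^2 = T + X this gives eta \<ge> (T + c^2 X) / (T + X), and the condition on N says
  exactly that c^2 is at least the value of x making (T + x X) / (T + X) equal to the target.\<close>

definition on_arc :: "real \<Rightarrow> real \<Rightarrow> real \<Rightarrow> bool" where
  "on_arc a b t \<longleftrightarrow> (\<exists>k::int. a \<le> t + 2 * pi * of_int k \<and> t + 2 * pi * of_int k \<le> b)"

definition arc :: "real \<Rightarrow> real \<Rightarrow> real set" where
  "arc a b = {t \<in> {-pi..<pi}. on_arc a b t}"

lemma on_arc_translate: "on_arc (a + d) (b + d) t \<longleftrightarrow> on_arc a b (t - d)"
  unfolding on_arc_def by (simp add: algebra_simps)

lemma on_arc_add_2pi_int: "on_arc a b (t + 2 * pi * of_int j) \<longleftrightarrow> on_arc a b t"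
  unfolding on_arc_def
proof
  assume "\<exists>k::int. a \<le> t + 2 * pi * of_int j + 2 * pi * of_int k \<and> t + 2 * pi * of_int j + 2 * pi * of_int k \<le> b"
  then show "\<exists>k::int. a \<le> t + 2 * pi * of_int k \<and> t + 2 * pi * of_int k \<le> b"
    by (metis (no_types) add.assoc distrib_left of_int_add)
next
  assume "\<exists>k::int. a \<le> t + 2 * pi * of_int k \<and> t + 2 * pi * of_int k \<le> b"
  then obtain k :: int where "a \<le> t + 2 * pi * of_int k" "t + 2 * pi * of_int k \<le> b" by blast
  then show "\<exists>k::int. a \<le> t + 2 * pi * of_int j + 2 * pi * of_int k \<and> t + 2 * pi * of_int j + 2 * pi * of_int k \<le> b"
    by (intro exI[of _ "k - j"]) (simp add: algebra_simps)
qed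

lemma on_arc_shift_2pi_int: "on_arc (a + 2 * pi * of_int j) (b + 2 * pi * of_int j) = on_arc a b"
proof
  fix t
  show "on_arc (a + 2 * pi * of_int j) (b + 2 * pi * of_int j) t = on_arc a b t"
    using on_arc_add_2pi_int[of a b "t - 2 * pi * of_int j" j] by (simp add: on_arc_translate)
qed

lemma arc_shift_2pi_int: "arc (a + 2 * pi * of_int j) (b + 2 * pi * of_int j) = arc a b"
  by (simp add: arc_def on_arc_shift_2pi_int)

lemma ex_int_shift_into_circle: "\<exists>j::int. -pi \<le> t + 2 * pi * of_int j \<and> t + 2 * pi * of_int j < pi"
proof -
  define k where "k = \<lfloor>(t + pi) / (2 * pi)\<rfloor>"
  have "of_int k * (2 * pi) \<le> t + pi" "t + pi < (of_int k + 1) * (2 * pi)"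
    using floor_divide_lower[of "2 * pi" "t + pi"] floor_divide_upper[of "2 * pi" "t + pi"]
    by (simp_all add: k_def)
  then show ?thesis
    by (intro exI[of _ "- k"]) (simp add: algebra_simps)
qed

lemma int_eq_0_if_2pi_bound:
  assumes "- 2 * pi < 2 * pi * of_int k" "2 * pi * of_int k < 2 * pi"
  shows "k = 0"
proof -
  have "- 1 < real_of_int k" "real_of_int k < 1"
    using mult_less_cancel_left_pos[of "2 * pi" "- 1" "real_of_int k"]
      mult_less_cancel_left_pos[of "2 * pi" "real_of_int k" 1] assms by simp_all
  then show ?thesis by linarith
qed

lemma on_arc_start_unique:
  assumes "-pi \<le> a" "a < pi" "a \<le> b" "b < a + 2 * pi" "-pi \<le> a'" "a' < pi"
    and eq: "on_arc a b = on_arc a' b'"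
  shows "a = a'"
proof -
  have "on_arc a b a"
    unfolding on_arc_def using assms by (intro exI[of _ 0]) simp
  then have "on_arc a' b' a"
    using eq by simp
  then obtain k :: int where k: "a' \<le> a + 2 * pi * of_int k" "a + 2 * pi * of_int k \<le> b'"
    by (auto simp: on_arc_def)
  define s where "s = a + 2 * pi * of_int k"
  have "s = a'"
  proof (rule ccontr)
    assume "s \<noteq> a'"
    define d where "d = min (s - a') (2 * pi - (b - a)) / 2"
    have d: "0 < d" "d < s - a'" "d < 2 * pi - (b - a)"
      using k \<open>s \<noteq> a'\<close> assms by (auto simp: d_def s_def)
    \<comment> \<open>a point just below s lies on the second arc but in the gap of the first\<close>
    have "on_arc a' b' (s - d)"
      unfolding on_arc_def using d k by (intro exI[of _ 0]) (simp add: s_def)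
    then have "on_arc a b (s - d)"
      using eq by simp
    then obtain j :: int where j: "a \<le> s - d + 2 * pi * of_int j" "s - d + 2 * pi * of_int j \<le> b"
      by (auto simp: on_arc_def)
    then have "d \<le> 2 * pi * of_int (k + j)" "2 * pi * of_int (k + j) \<le> b - a + d"
      unfolding of_int_add by (simp_all add: s_def algebra_simps)
    then have "k + j = 0"
      using d by (intro int_eq_0_if_2pi_bound) linarith+
    with \<open>d \<le> 2 * pi * of_int (k + j)\<close> \<open>0 < d\<close> show False by simp
  qed
  then have "k = 0"
    using assms unfolding s_def by (intro int_eq_0_if_2pi_bound; linarith)
  with \<open>s = a'\<close> show ?thesis by (simp add: s_def)
qed

lemma on_arc_end_le:
  assumes "a \<le> b" "b < a + 2 * pi" "b' < a + 2 * pi" and eq: "on_arc a b = on_arc a b'"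
  shows "b \<le> b'"
proof -
  have "on_arc a b b"
    unfolding on_arc_def using assms by (intro exI[of _ 0]) simp
  then have "on_arc a b' b"
    using eq by simp
  then obtain k :: int where k: "a \<le> b + 2 * pi * of_int k" "b + 2 * pi * of_int k \<le> b'"
    by (auto simp: on_arc_def)
  then have "k = 0"
    using assms by (intro int_eq_0_if_2pi_bound; linarith)
  with k show ?thesis by simp
qed

lemma on_arc_eq_if_arc_eq:
  assumes "arc a b = arc a' b'"
  shows "on_arc a b = on_arc a' b'"
proof
  fix t
  obtain j :: int where j: "-pi \<le> t + 2 * pi * of_int j" "t + 2 * pi * of_int j < pi"
    using ex_int_shift_into_circle by blast
  then have "on_arc a b (t + 2 * pi * of_int j) = on_arc a' b' (t + 2 * pi * of_int j)"
    using assms by (auto simp: arc_def set_eq_iff)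
  then show "on_arc a b t = on_arc a' b' t"
    by (simp add: on_arc_add_2pi_int)
qed

lemma arc_ends_arc:
  assumes "-pi \<le> a" "a < pi" "a \<le> b" "b < a + 2 * pi"
  shows "arc_ends (arc a b) = (b, a)"
  unfolding arc_ends_def
proof (rule the_equality)
  fix e
  assume "case e of (b', a') \<Rightarrow> -pi \<le> a' \<and> a' < pi \<and> a' \<le> b' \<and> b' < a' + 2 * pi \<and>
      arc a b = {t \<in> {-pi..<pi}. \<exists>k::int. a' \<le> t + 2 * pi * of_int k \<and> t + 2 * pi * of_int k \<le> b'}"
  moreover obtain b' a' where e: "e = (b', a')" by (cases e)
  ultimately have a': "-pi \<le> a'" "a' < pi" "a' \<le> b'" "b' < a' + 2 * pi" "arc a b = arc a' b'"
    by (auto simp: arc_def on_arc_def)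
  have eq: "on_arc a b = on_arc a' b'"
    using a'(5) by (rule on_arc_eq_if_arc_eq)
  have "a = a'"
    using assms a'(1,2) eq by (rule on_arc_start_unique)
  then have "b \<le> b'" "b' \<le> b"
    using assms a' eq by (auto intro: on_arc_end_le)
  with e \<open>a = a'\<close> show "e = (b, a)" by simp
qed (use assms in \<open>auto simp: arc_def on_arc_def\<close>)

lemma on_arc_mono: "a' \<le> a \<Longrightarrow> b \<le> b' \<Longrightarrow> on_arc a b t \<Longrightarrow> on_arc a' b' t"
  unfolding on_arc_def by (meson order.trans)

lemma on_arc_inter:
  assumes "a \<le> c" "c \<le> b" "b \<le> d" "d < a + 2 * pi"
  shows "on_arc a b t \<and> on_arc c d t \<longleftrightarrow> on_arc c b t"
proof
  assume "on_arc a b t \<and> on_arc c d t"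
  then obtain k l :: int where
    k: "a \<le> t + 2 * pi * of_int k" "t + 2 * pi * of_int k \<le> b" and
    l: "c \<le> t + 2 * pi * of_int l" "t + 2 * pi * of_int l \<le> d"
    by (auto simp: on_arc_def)
  have "2 * pi * of_int (k - l) = (t + 2 * pi * of_int k) - (t + 2 * pi * of_int l)"
    by (simp add: algebra_simps)
  then have "k - l = 0"
    using k l assms by (intro int_eq_0_if_2pi_bound) linarith+
  then show "on_arc c b t"
    unfolding on_arc_def using k l by (intro exI[of _ k]) simp
qed (use assms on_arc_mono in blast)

lemma sin_nonneg_iff_on_arc: "0 \<le> sin x \<longleftrightarrow> on_arc 0 pi x"
proof
  obtain j :: int where j: "-pi \<le> x + 2 * pi * of_int j" "x + 2 * pi * of_int j < pi"
    using ex_int_shift_into_circle by blast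
  let ?y = "x + 2 * pi * of_int j"
  assume "0 \<le> sin x"
  then have "0 \<le> sin ?y"
    by (simp add: sin_add)
  moreover have "sin ?y < 0" if "-pi < ?y" "?y < 0"
  proof -
    have "0 < sin (- ?y)"
      using that by (intro sin_gt_zero) auto
    then show ?thesis
      unfolding sin_minus by linarith
  qed
  ultimately have "?y = -pi \<or> 0 \<le> ?y"
    using j by force
  then have "on_arc 0 pi ?y"
  proof
    assume "?y = -pi"
    then show ?thesis
      unfolding on_arc_def by (intro exI[of _ 1]) simp
  next
    assume "0 \<le> ?y"
    then show ?thesis
      unfolding on_arc_def using j by (intro exI[of _ 0]) simp
  qed
  then show "on_arc 0 pi x"
    by (simp add: on_arc_add_2pi_int)
next
  assume "on_arc 0 pi x"
  then obtain k :: int where "0 \<le> x + 2 * pi * of_int k" "x + 2 * pi * of_int k \<le> pi"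
    by (auto simp: on_arc_def)
  then have "0 \<le> sin (x + 2 * pi * of_int k)"
    by (rule sin_ge_zero)
  then show "0 \<le> sin x"
    by (simp add: sin_add)
qed

lemma cos_diff_shift: "cos (t - (a + L)) - cos (t - a) = 2 * sin (t - (a + L / 2)) * sin (L / 2 :: real)"
proof -
  have "(t - (a + L) + (t - a)) / 2 = t - (a + L / 2)" "(t - a - (t - (a + L))) / 2 = L / 2"
    by (simp_all add: field_simps)
  with cos_diff_cos[of "t - (a + L)" "t - a"] show ?thesis
    by metis
qed

lemma cos_le_cos_shift_iff_on_arc:
  assumes "0 < L" "L < 2 * pi"
  shows "cos (t - a) \<le> cos (t - (a + L)) \<longleftrightarrow> on_arc (a + L / 2) (a + L / 2 + pi) t"
proof -
  have "0 < sin (L / 2)"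
    using assms by (intro sin_gt_zero) auto
  then have "0 \<le> 2 * sin (t - (a + L / 2)) * sin (L / 2) \<longleftrightarrow> 0 \<le> sin (t - (a + L / 2))"
    by (simp add: zero_le_mult_iff)
  then have "cos (t - a) \<le> cos (t - (a + L)) \<longleftrightarrow> 0 \<le> sin (t - (a + L / 2))"
    using cos_diff_shift[of t a L] by linarith
  also have "\<dots> \<longleftrightarrow> on_arc (0 + (a + L / 2)) (pi + (a + L / 2)) t"
    by (simp only: sin_nonneg_iff_on_arc on_arc_translate)
  finally show ?thesis
    by (simp add: add.commute)
qed

lemma cos_shift_le_cos_iff_on_arc:
  assumes "0 < L" "L < 2 * pi"
  shows "cos (t - (a + L)) \<le> cos (t - a) \<longleftrightarrow> on_arc (a + L / 2 - pi) (a + L / 2) t"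
proof -
  have "0 < sin (L / 2)"
    using assms by (intro sin_gt_zero) auto
  then have "2 * sin (t - (a + L / 2)) * sin (L / 2) \<le> 0 \<longleftrightarrow> sin (t - (a + L / 2)) \<le> 0"
    by (simp add: mult_le_0_iff)
  then have "cos (t - (a + L)) \<le> cos (t - a) \<longleftrightarrow> 0 \<le> - sin (t - (a + L / 2))"
    using cos_diff_shift[of t a L] by linarith
  also have "\<dots> \<longleftrightarrow> 0 \<le> sin (t - (a + L / 2 - pi))"
    using sin_periodic_pi[of "t - (a + L / 2)"] by (simp add: algebra_simps)
  also have "\<dots> \<longleftrightarrow> on_arc (0 + (a + L / 2 - pi)) (pi + (a + L / 2 - pi)) t"
    by (simp only: sin_nonneg_iff_on_arc on_arc_translate)
  finally show ?thesis
    by simp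
qed

text \<open>Algorithm (A1) only compares values of its objective; for an objective ordered like
  cos (x - p) the only thing it can learn is the peak p.\<close>
definition cos_ordered :: "(real \<Rightarrow> real) \<Rightarrow> real \<Rightarrow> bool" where
  "cos_ordered f p \<longleftrightarrow> (\<forall>x y. f x < f y \<longleftrightarrow> cos (x - p) < cos (y - p))"

lemma a1_step_halfplane:
  assumes "0 < L" "L < 2 * pi" "A \<subseteq> {-pi..<pi}"
  obtains c where "c = a + L / 2 \<or> c = a + L / 2 - pi"
    and "a1_step f (A, a + L, a) = (A \<inter> arc c (c + pi), arc_ends (A \<inter> arc c (c + pi)))"
    and "\<And>p. cos_ordered f p \<Longrightarrow> on_arc c (c + pi) p"
proof (cases "f a < f (a + L)")
  case True
  let ?c = "a + L / 2"
  have "A - {t \<in> {-pi..<pi}. cos (t - (a + L)) < cos (t - a)} = A \<inter> arc ?c (?c + pi)"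
    using assms by (auto simp: arc_def cos_le_cos_shift_iff_on_arc[symmetric] not_less)
  then have "a1_step f (A, a + L, a) = (A \<inter> arc ?c (?c + pi), arc_ends (A \<inter> arc ?c (?c + pi)))"
    using True unfolding a1_step_def Let_def by simp
  moreover have "on_arc ?c (?c + pi) p" if "cos_ordered f p" for p
    using that True unfolding cos_ordered_def
    by (metis cos_le_cos_shift_iff_on_arc[OF assms(1,2)] cos_minus minus_diff_eq less_imp_le)
  ultimately show ?thesis
    using that by blast
next
  case False
  let ?c = "a + L / 2 - pi"
  have "A - {t \<in> {-pi..<pi}. cos (t - (a + L)) > cos (t - a)} = A \<inter> arc ?c (?c + pi)"
    using assms by (auto simp: arc_def cos_shift_le_cos_iff_on_arc[symmetric] not_less)
  then have "a1_step f (A, a + L, a) = (A \<inter> arc ?c (?c + pi), arc_ends (A \<inter> arc ?c (?c + pi)))"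
    using False unfolding a1_step_def Let_def by simp
  moreover have "on_arc ?c (?c + pi) p" if "cos_ordered f p" for p
    using that False unfolding cos_ordered_def
    by (metis cos_shift_le_cos_iff_on_arc[OF assms(1,2)] cos_minus minus_diff_eq not_less diff_add_cancel)
  ultimately show ?thesis
    using that by blast
qed

lemma obtain_arc_start_in_circle:
  obtains a' where "-pi \<le> a'" "a' < pi" "on_arc a' (a' + L) = on_arc a (a + L)"
    "arc a' (a' + L) = arc a (a + L)"
proof -
  obtain j :: int where "-pi \<le> a + 2 * pi * of_int j" "a + 2 * pi * of_int j < pi"
    using ex_int_shift_into_circle by blast
  moreover have "a + 2 * pi * of_int j + L = a + L + 2 * pi * of_int j"
    by simp
  ultimately show thesis
    using that[of "a + 2 * pi * of_int j"]
      on_arc_shift_2pi_int[of a j "a + L"] arc_shift_2pi_int[of a j "a + L"]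
    by presburger
qed

text \<open>The initial state holds the whole circle while its endpoints 0 and -pi are only half a
  circle apart, so the first comparison already leaves an arc of length pi.\<close>
lemma a1_first_step:
  obtains a where "-pi \<le> a" "a < pi" "a1_step f ({-pi..<pi}, 0, -pi) = (arc a (a + pi), a + pi, a)"
    and "cos_ordered f p \<Longrightarrow> on_arc a (a + pi) p"
proof -
  have "0 < pi" "pi < 2 * pi" "{-pi..<pi} \<subseteq> {-pi..<pi}"
    by simp_all
  then obtain c where "c = -pi + pi / 2 \<or> c = -pi + pi / 2 - pi"
    and step: "a1_step f ({-pi..<pi}, -pi + pi, -pi) = ({-pi..<pi} \<inter> arc c (c + pi), arc_ends ({-pi..<pi} \<inter> arc c (c + pi)))"
    and peak: "\<And>p. cos_ordered f p \<Longrightarrow> on_arc c (c + pi) p"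
    by (rule a1_step_halfplane[where f = f and a = "-pi"]) blast
  obtain a where a: "-pi \<le> a" "a < pi" "on_arc a (a + pi) = on_arc c (c + pi)" "arc a (a + pi) = arc c (c + pi)"
    by (rule obtain_arc_start_in_circle)
  have "{-pi..<pi} \<inter> arc c (c + pi) = arc a (a + pi)"
    unfolding a(4) by (auto simp: arc_def)
  moreover have "arc_ends (arc a (a + pi)) = (a + pi, a)"
    using a(1,2) by (intro arc_ends_arc) auto
  ultimately have "a1_step f ({-pi..<pi}, 0, -pi) = (arc a (a + pi), a + pi, a)"
    using step by simp
  moreover have "on_arc a (a + pi) p" if "cos_ordered f p"
    using peak[OF that] a(3) by simp
  ultimately show thesis
    using that a(1,2) by blast
qed

lemma a1_halving_step:
  assumes "-pi \<le> a" "a < pi" "0 < L" "L \<le> pi"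
  obtains a' where "-pi \<le> a'" "a' < pi"
    and "a1_step f (arc a (a + L), a + L, a) = (arc a' (a' + L / 2), a' + L / 2, a')"
    and "cos_ordered f p \<Longrightarrow> on_arc a (a + L) p \<Longrightarrow> on_arc a' (a' + L / 2) p"
proof -
  have "L < 2 * pi" "arc a (a + L) \<subseteq> {-pi..<pi}"
    using assms by (auto simp: arc_def)
  with assms(3) obtain c where c: "c = a + L / 2 \<or> c = a + L / 2 - pi"
    and step: "a1_step f (arc a (a + L), a + L, a) = (arc a (a + L) \<inter> arc c (c + pi), arc_ends (arc a (a + L) \<inter> arc c (c + pi)))"
    and peak: "\<And>p. cos_ordered f p \<Longrightarrow> on_arc c (c + pi) p"
    by (rule a1_step_halfplane[where f = f and a = a]) blast
  \<comment> \<open>the kept half-circle cuts the arc in its upper or lower half\<close>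
  obtain b where b: "\<And>t. on_arc a (a + L) t \<and> on_arc c (c + pi) t \<longleftrightarrow> on_arc b (b + L / 2) t"
    using c
  proof
    assume "c = a + L / 2"
    then show thesis
      using that[of c] on_arc_inter[of a c "a + L" "c + pi"] assms by (simp add: algebra_simps)
  next
    assume "c = a + L / 2 - pi"
    then show thesis
      using that[of a] on_arc_inter[of c a "c + pi" "a + L"] assms by (simp add: algebra_simps conj_commute)
  qed
  obtain a' where a': "-pi \<le> a'" "a' < pi" "on_arc a' (a' + L / 2) = on_arc b (b + L / 2)"
    "arc a' (a' + L / 2) = arc b (b + L / 2)"
    by (rule obtain_arc_start_in_circle)
  have "arc a (a + L) \<inter> arc c (c + pi) = arc b (b + L / 2)"
    using b by (auto simp: arc_def)
  moreover have "arc_ends (arc a' (a' + L / 2)) = (a' + L / 2, a')"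
    using a'(1,2) assms by (intro arc_ends_arc) auto
  ultimately have "a1_step f (arc a (a + L), a + L, a) = (arc a' (a' + L / 2), a' + L / 2, a')"
    using step a'(4) by simp
  moreover have "on_arc a' (a' + L / 2) p" if "cos_ordered f p" "on_arc a (a + L) p"
    using b[of p] peak[OF that(1)] that(2) a'(3) by simp
  ultimately show thesis
    using that a'(1,2) by blast
qed

lemma a1_iterate:
  "\<exists>a. -pi \<le> a \<and> a < pi \<and>
     (a1_step f ^^ Suc n) ({-pi..<pi}, 0, -pi) = (arc a (a + pi / 2 ^ n), a + pi / 2 ^ n, a) \<and>
     (cos_ordered f p \<longrightarrow> on_arc a (a + pi / 2 ^ n) p)"
proof (induction n)
  case 0
  obtain a where "-pi \<le> a" "a < pi" "a1_step f ({-pi..<pi}, 0, -pi) = (arc a (a + pi), a + pi, a)"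
    "cos_ordered f p \<Longrightarrow> on_arc a (a + pi) p"
    by (rule a1_first_step[where f = f and p = p]) blast
  then show ?case
    by auto
next
  case (Suc n)
  define L where "L = pi / 2 ^ n"
  obtain a where a: "-pi \<le> a" "a < pi" "(a1_step f ^^ Suc n) ({-pi..<pi}, 0, -pi) = (arc a (a + L), a + L, a)"
    "cos_ordered f p \<longrightarrow> on_arc a (a + L) p"
    using Suc.IH unfolding L_def by blast
  have "0 < L" "L \<le> pi"
    by (auto simp: L_def divide_le_eq)
  with a(1,2) obtain a' where a': "-pi \<le> a'" "a' < pi"
    "a1_step f (arc a (a + L), a + L, a) = (arc a' (a' + L / 2), a' + L / 2, a')"
    "cos_ordered f p \<Longrightarrow> on_arc a (a + L) p \<Longrightarrow> on_arc a' (a' + L / 2) p"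
    by (rule a1_halving_step[where f = f and p = p]) blast
  have "(a1_step f ^^ Suc (Suc n)) ({-pi..<pi}, 0, -pi) = (arc a' (a' + L / 2), a' + L / 2, a')"
    using a(3) a'(3) by simp
  moreover have "pi / 2 ^ Suc n = L / 2"
    by (simp add: L_def)
  ultimately show ?case
    using a(4) a'(1,2,4) by metis
qed

lemma cos_half_le_cos_from_midpoint:
  assumes "on_arc a (a + L) p" "L \<le> 2 * pi"
  shows "cos (L / 2) \<le> cos (p - (a + L / 2))"
proof -
  obtain k :: int where k: "a \<le> p + 2 * pi * of_int k" "p + 2 * pi * of_int k \<le> a + L"
    using assms(1) by (auto simp: on_arc_def)
  have "cos (p - (a + L / 2)) = cos (p - (a + L / 2) + 2 * pi * of_int k)"
    by (simp add: cos_add)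
  also have "\<dots> = cos \<bar>p + 2 * pi * of_int k - (a + L / 2)\<bar>"
    by (simp add: algebra_simps)
  finally have "cos (p - (a + L / 2)) = cos \<bar>p + 2 * pi * of_int k - (a + L / 2)\<bar>" .
  moreover have "cos (L / 2) \<le> cos \<bar>p + 2 * pi * of_int k - (a + L / 2)\<bar>"
    using k assms(2) by (intro cos_monotone_0_pi_le) (auto simp: abs_if)
  ultimately show ?thesis
    by simp
qed

lemma a1_output_near_peak:
  assumes "1 \<le> N" "cos_ordered f p"
  shows "cos (pi / 2 ^ N) \<le> cos (a1_output N f - p)"
proof -
  obtain n where N: "N = Suc n"
    using assms(1) by (cases N) auto
  define L where "L = pi / 2 ^ n"
  obtain a where a: "(a1_step f ^^ N) ({-pi..<pi}, 0, -pi) = (arc a (a + L), a + L, a)"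
    "on_arc a (a + L) p"
    using a1_iterate[where f = f and n = n and p = p] assms(2) unfolding N L_def by blast
  have "L \<le> pi"
    by (auto simp: L_def divide_le_eq)
  then have "L \<le> 2 * pi"
    using pi_gt_zero by linarith
  with a(2) have "cos (L / 2) \<le> cos (p - (a + L / 2))"
    by (rule cos_half_le_cos_from_midpoint)
  moreover have "a1_output N f = a + L / 2"
    using a(1) by (simp add: a1_output_def)
  moreover have "pi / 2 ^ N = L / 2"
    by (simp add: N L_def)
  ultimately show ?thesis
    by (metis cos_minus minus_diff_eq)
qed

lemma cmod_sqrt_cis_add_sq:
  assumes "0 \<le> b"
  shows "(cmod (of_real (sqrt b) * cis u + z))\<^sup>2 = b + (cmod z)\<^sup>2 + 2 * sqrt b * cmod z * cos (u - Arg z)"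
proof -
  define r where "r = cmod z"
  define \<alpha> where "\<alpha> = Arg z"
  have z: "z = of_real r * cis \<alpha>"
    using rcis_cmod_Arg[of z] by (simp add: rcis_def r_def \<alpha>_def)
  have "(cmod (of_real (sqrt b) * cis u + z))\<^sup>2 =
        (sqrt b * cos u + r * cos \<alpha>)\<^sup>2 + (sqrt b * sin u + r * sin \<alpha>)\<^sup>2"
    by (simp add: cmod_power2 z)
  also have "\<dots> = (sqrt b)\<^sup>2 * ((cos u)\<^sup>2 + (sin u)\<^sup>2) + r\<^sup>2 * ((cos \<alpha>)\<^sup>2 + (sin \<alpha>)\<^sup>2)
      + 2 * sqrt b * r * (cos u * cos \<alpha> + sin u * sin \<alpha>)"
    by algebra
  also have "\<dots> = b + r\<^sup>2 + 2 * sqrt b * r * cos (u - \<alpha>)"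
    using assms by (simp add: cos_diff)
  finally show ?thesis
    by (simp add: r_def \<alpha>_def)
qed

lemma cos_ordered_affine_cos:
  assumes "0 < \<kappa>"
  shows "cos_ordered (\<lambda>x. \<gamma> + \<kappa> * cos (x - p)) p"
  using assms by (simp add: cos_ordered_def)

lemma cos_ordered_beam_power:
  assumes "0 < b" "0 < P" "z \<noteq> 0"
  shows "cos_ordered (\<lambda>\<phi>. P * (cmod (of_real (sqrt b) * cis (\<phi> - \<theta>) + z))\<^sup>2) (\<theta> + Arg z)"
proof -
  have "P * (cmod (of_real (sqrt b) * cis (\<phi> - \<theta>) + z))\<^sup>2
      = P * (b + (cmod z)\<^sup>2) + P * (2 * sqrt b * cmod z) * cos (\<phi> - (\<theta> + Arg z))" for \<phi>
    using cmod_sqrt_cis_add_sq[of b "\<phi> - \<theta>" z] assms(1) by (simp add: algebra_simps)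
  moreover have "0 < P * (2 * sqrt b * cmod z)"
    using assms by simp
  ultimately show ?thesis
    by (simp only: cos_ordered_affine_cos)
qed

lemma power_invariant_step:
  assumes "0 < b" "0 \<le> c" "c \<le> 1" "0 \<le> T"
    and IH: "T + c\<^sup>2 * (B\<^sup>2 - T) \<le> (cmod z)\<^sup>2"
    and phase: "z \<noteq> 0 \<Longrightarrow> c \<le> cos (u - Arg z)"
  shows "(T + b) + c\<^sup>2 * ((B + sqrt b)\<^sup>2 - (T + b)) \<le> (cmod (of_real (sqrt b) * cis u + z))\<^sup>2"
proof -
  define r where "r = cmod z"
  define \<delta> where "\<delta> = cos (u - Arg z)"
  have "c\<^sup>2 * T \<le> T"
    using assms(2-4) by (intro mult_left_le_one_le) (simp_all add: power_le_one)
  moreover have "T + c\<^sup>2 * (B\<^sup>2 - T) = (c * B)\<^sup>2 + (T - c\<^sup>2 * T)"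
    by (simp add: power_mult_distrib right_diff_distrib)
  ultimately have "(c * B)\<^sup>2 \<le> r\<^sup>2"
    using IH unfolding r_def by linarith
  then have "c * B \<le> r"
    by (rule power2_le_imp_le) (simp add: r_def)
  have "c * r \<le> r * \<delta>"
    using phase by (cases "z = 0") (auto simp: r_def \<delta>_def mult.commute)
  have "c\<^sup>2 * B = c * (c * B)"
    by (simp add: power2_eq_square)
  also have "\<dots> \<le> c * r"
    using \<open>c * B \<le> r\<close> assms(2) by (rule mult_left_mono)
  also have "\<dots> \<le> r * \<delta>"
    by fact
  finally have "2 * sqrt b * (c\<^sup>2 * B) \<le> 2 * sqrt b * (r * \<delta>)"
    by (rule mult_left_mono) (use assms(1) in simp)
  moreover have "(T + b) + c\<^sup>2 * ((B + sqrt b)\<^sup>2 - (T + b))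
      = (T + c\<^sup>2 * (B\<^sup>2 - T)) + b + 2 * sqrt b * (c\<^sup>2 * B)"
    using assms(1) by (simp add: power2_sum algebra_simps)
  moreover have "(cmod (of_real (sqrt b) * cis u + z))\<^sup>2 = b + r\<^sup>2 + 2 * sqrt b * (r * \<delta>)"
    using cmod_sqrt_cis_add_sq[of b u z] assms(1) by (simp add: r_def \<delta>_def mult.assoc)
  ultimately show ?thesis
    using IH unfolding r_def by linarith
qed

lemma phases_eq_of_le:
  "i \<le> m \<Longrightarrow> m \<le> m' \<Longrightarrow> phases beta theta P N m' i = phases beta theta P N m i"
proof (induction m')
  case (Suc m')
  then show ?case
    by (cases "m = Suc m'") (auto simp: Let_def le_Suc_eq)
qed simp

lemma beamformed_power_bound:
  assumes beta: "\<forall>m\<in>{1..M}. beta m > 0" and "0 < P" "1 \<le> N"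
  shows "m \<le> M \<Longrightarrow>
    (\<Sum>i\<in>{1..m}. beta i) + (cos (pi / 2 ^ N))\<^sup>2 * ((\<Sum>i\<in>{1..m}. sqrt (beta i))\<^sup>2 - (\<Sum>i\<in>{1..m}. beta i))
      \<le> (cmod (\<Sum>i\<in>{1..m}. of_real (sqrt (beta i)) * cis (phases beta theta P N M i - theta i)))\<^sup>2"
proof (induction m)
  case (Suc m)
  let ?ph = "phases beta theta P N M"
  define z where "z = (\<Sum>i\<in>{1..m}. of_real (sqrt (beta i)) * cis (?ph i - theta i))"
  define T where "T = (\<Sum>i\<in>{1..m}. beta i)"
  define B where "B = (\<Sum>i\<in>{1..m}. sqrt (beta i))"
  define c where "c = cos (pi / 2 ^ N)"
  have "0 < beta (Suc m)"
    using beta Suc.prems by simp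
  have c: "0 \<le> c" "c \<le> 1"
  proof -
    have "pi / 2 ^ N \<le> pi / 2"
      using \<open>1 \<le> N\<close> by (intro divide_left_mono) (auto simp: self_le_power)
    then show "0 \<le> c"
      unfolding c_def by (intro cos_ge_zero) (auto intro: order_trans[of _ 0])
  qed (simp add: c_def)
  have "0 \<le> T"
    using beta Suc.prems unfolding T_def by (intro sum_nonneg) (auto simp: less_imp_le)
  have IH: "T + c\<^sup>2 * (B\<^sup>2 - T) \<le> (cmod z)\<^sup>2"
    using Suc by (simp add: T_def B_def c_def z_def)
  have "c \<le> cos (?ph (Suc m) - theta (Suc m) - Arg z)" if "z \<noteq> 0"
  proof -
    have "1 \<le> m"
      using that by (cases m) (auto simp: z_def)
    define f where "f = Qm beta theta P (phases beta theta P N m) (Suc m)"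
    have "(\<Sum>i\<in>{1..<Suc m}. of_real (sqrt (beta i)) * cis (phases beta theta P N m i - theta i)) = z"
      unfolding z_def using phases_eq_of_le[of _ m M] Suc.prems by (intro sum.cong) auto
    then have "f = (\<lambda>\<phi>. P * (cmod (of_real (sqrt (beta (Suc m))) * cis (\<phi> - theta (Suc m)) + z))\<^sup>2)"
      by (simp add: f_def Qm_def fun_eq_iff)
    then have "cos_ordered f (theta (Suc m) + Arg z)"
      using cos_ordered_beam_power[OF \<open>0 < beta (Suc m)\<close> \<open>0 < P\<close> that] by simp
    then have "c \<le> cos (a1_output N f - (theta (Suc m) + Arg z))"
      unfolding c_def by (rule a1_output_near_peak[OF \<open>1 \<le> N\<close>])
    moreover have "?ph (Suc m) = phases beta theta P N (Suc m) (Suc m)"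
      using Suc.prems by (intro phases_eq_of_le) auto
    moreover have "phases beta theta P N (Suc m) (Suc m) = a1_output N f"
      using \<open>1 \<le> m\<close> by (simp add: f_def Let_def)
    ultimately show ?thesis
      by (simp add: diff_diff_eq)
  qed
  with power_invariant_step[OF \<open>0 < beta (Suc m)\<close> c \<open>0 \<le> T\<close> IH]
  have "(T + beta (Suc m)) + c\<^sup>2 * ((B + sqrt (beta (Suc m)))\<^sup>2 - (T + beta (Suc m)))
      \<le> (cmod (of_real (sqrt (beta (Suc m))) * cis (?ph (Suc m) - theta (Suc m)) + z))\<^sup>2"
    by blast
  moreover have "(\<Sum>i\<in>{1..Suc m}. beta i) = T + beta (Suc m)"
    "(\<Sum>i\<in>{1..Suc m}. sqrt (beta i)) = B + sqrt (beta (Suc m))"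
    "(\<Sum>i\<in>{1..Suc m}. of_real (sqrt (beta i)) * cis (?ph i - theta i))
       = of_real (sqrt (beta (Suc m))) * cis (?ph (Suc m) - theta (Suc m)) + z"
    by (simp_all add: T_def B_def z_def)
  ultimately show ?case
    by (simp only: c_def)
qed simp

lemma sum_sqrt_squared:
  assumes "finite I" "\<forall>i\<in>I. 0 \<le> beta i"
  shows "(\<Sum>i\<in>I. sqrt (beta i))\<^sup>2 = (\<Sum>i\<in>I. beta i) + (\<Sum>i\<in>I. \<Sum>j\<in>I - {i}. sqrt (beta i * beta j))"
proof -
  have "(\<Sum>i\<in>I. sqrt (beta i))\<^sup>2 = (\<Sum>i\<in>I. \<Sum>j\<in>I. sqrt (beta i) * sqrt (beta j))"
    by (simp add: power2_eq_square sum_product)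
  also have "\<dots> = (\<Sum>i\<in>I. beta i + (\<Sum>j\<in>I - {i}. sqrt (beta i * beta j)))"
    using assms by (intro sum.cong) (simp_all add: sum.remove real_sqrt_mult)
  finally show ?thesis
    by (simp add: sum.distrib)
qed

lemma cross_sum_pos:
  assumes "finite I" "i \<in> I" "j \<in> I" "i \<noteq> j" "\<forall>k\<in>I. 0 < beta k"
  shows "0 < (\<Sum>k\<in>I. \<Sum>l\<in>I - {k}. sqrt (beta k * beta l))"
proof -
  have "0 < sqrt (beta i * beta j)"
    using assms by simp
  also have "\<dots> \<le> (\<Sum>l\<in>I - {i}. sqrt (beta i * beta l))"
    using assms by (intro member_le_sum) (auto simp: less_imp_le)
  also have "\<dots> \<le> (\<Sum>k\<in>I. \<Sum>l\<in>I - {k}. sqrt (beta k * beta l))"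
    using assms by (intro member_le_sum sum_nonneg) (auto simp: less_imp_le)
  finally show ?thesis .
qed

lemma le_cos_pi_div_power_sq:
  assumes "0 \<le> x" "x < 1" "log 2 (pi / arccos (sqrt x)) \<le> real N"
  shows "x \<le> (cos (pi / 2 ^ N))\<^sup>2"
proof -
  have "0 \<le> sqrt x" "sqrt x < 1"
    using assms by auto
  moreover have "-1 < sqrt x"
    by (rule less_le_trans[OF _ \<open>0 \<le> sqrt x\<close>]) simp
  ultimately have "0 < arccos (sqrt x)" "arccos (sqrt x) \<le> pi / 2"
    using arccos_lt_bounded[of "sqrt x"] arccos_le_pi2[of "sqrt x"] by simp_all
  moreover have "pi / arccos (sqrt x) \<le> 2 ^ N"
    using assms(3) \<open>0 < arccos (sqrt x)\<close> by (simp add: log_le_iff powr_realpow)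
  ultimately have "pi / 2 ^ N \<le> arccos (sqrt x)"
    by (simp add: divide_le_eq mult.commute)
  moreover have "arccos (sqrt x) \<le> pi"
    using \<open>arccos (sqrt x) \<le> pi / 2\<close> pi_gt_zero by linarith
  ultimately have "cos (arccos (sqrt x)) \<le> cos (pi / 2 ^ N)"
    by (intro cos_monotone_0_pi_le) simp_all
  moreover have "cos (arccos (sqrt x)) = sqrt x"
    using \<open>-1 < sqrt x\<close> \<open>sqrt x < 1\<close> by (intro cos_arccos) simp_all
  ultimately have "sqrt x \<le> cos (pi / 2 ^ N)"
    by simp
  then have "(sqrt x)\<^sup>2 \<le> (cos (pi / 2 ^ N))\<^sup>2"
    using \<open>0 \<le> sqrt x\<close> by (rule power_mono)
  then show ?thesis
    using assms(1) by simp
qed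

lemma eta_lower_bound:
  assumes "1 \<le> M" "\<forall>m\<in>{1..M}. beta m > 0" "0 < P" "1 \<le> N"
  defines "T \<equiv> \<Sum>m\<in>{1..M}. beta m"
    and "X \<equiv> \<Sum>i\<in>{1..M}. \<Sum>j\<in>{1..M}-{i}. sqrt (beta i * beta j)"
  shows "(T + (cos (pi / 2 ^ N))\<^sup>2 * X) / (T + X) \<le> eta M beta theta P N"
proof -
  define S where "S = (\<Sum>m\<in>{1..M}. of_real (sqrt (beta m)) * cis (phases beta theta P N M m - theta m))"
  have sq: "(\<Sum>m\<in>{1..M}. sqrt (beta m))\<^sup>2 = T + X"
    unfolding T_def X_def using assms(2) by (intro sum_sqrt_squared) (auto simp: less_imp_le)
  have "T + (cos (pi / 2 ^ N))\<^sup>2 * X \<le> (cmod S)\<^sup>2"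
    using beamformed_power_bound[OF assms(2-4) order_refl, of theta] sq unfolding S_def T_def by simp
  moreover have "eta M beta theta P N = (cmod S)\<^sup>2 / (T + X)"
    using assms(3) unfolding eta_def Qd_def Qstar_def S_def[symmetric] sq by simp
  moreover have "0 \<le> T + X"
    by (simp flip: sq)
  ultimately show ?thesis
    by (simp add: divide_right_mono)
qed

theorem corollary1:
  fixes M N :: nat and beta theta :: "nat \<Rightarrow> real" and P eta_hat :: real
  assumes "M \<ge> 2"
    and "\<forall>m\<in>{1..M}. beta m > 0"
    and "\<forall>m\<in>{1..M}. -pi \<le> theta m \<and> theta m < pi"
    and "P > 0"
    and "N \<ge> 1"
    and "0 < eta_hat" and "eta_hat \<le> 1"
    and "0 \<le> eta_hat - (1 - eta_hat) * (\<Sum>m\<in>{1..M}. beta m)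
                 / (\<Sum>i\<in>{1..M}. \<Sum>j\<in>{1..M}-{i}. sqrt (beta i * beta j))"
    and "eta_hat - (1 - eta_hat) * (\<Sum>m\<in>{1..M}. beta m)
                 / (\<Sum>i\<in>{1..M}. \<Sum>j\<in>{1..M}-{i}. sqrt (beta i * beta j)) < 1"
    and "real N \<ge> log 2 (pi / arccos (sqrt (eta_hat - (1 - eta_hat) * (\<Sum>m\<in>{1..M}. beta m)
                 / (\<Sum>i\<in>{1..M}. \<Sum>j\<in>{1..M}-{i}. sqrt (beta i * beta j)))))"
  shows "eta M beta theta P N \<ge> eta_hat"
proof -
  define T where "T = (\<Sum>m\<in>{1..M}. beta m)"
  define X where "X = (\<Sum>i\<in>{1..M}. \<Sum>j\<in>{1..M}-{i}. sqrt (beta i * beta j))"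
  define x where "x = eta_hat - (1 - eta_hat) * T / X"
  have "0 < X"
    unfolding X_def using assms(1,2) by (intro cross_sum_pos[of _ 1 2]) auto
  have "0 \<le> T"
    unfolding T_def using assms(2) by (intro sum_nonneg) (auto simp: less_imp_le)
  have "x \<le> (cos (pi / 2 ^ N))\<^sup>2"
    using assms(8-10) by (intro le_cos_pi_div_power_sq) (simp_all add: x_def T_def X_def)
  have "T + x * X = eta_hat * (T + X)"
    using \<open>0 < X\<close> by (simp add: x_def field_simps)
  then have "eta_hat = (T + x * X) / (T + X)"
    using \<open>0 < X\<close> \<open>0 \<le> T\<close> by simp
  also have "\<dots> \<le> (T + (cos (pi / 2 ^ N))\<^sup>2 * X) / (T + X)"
    using \<open>x \<le> _\<close> \<open>0 < X\<close> \<open>0 \<le> T\<close> by (intro divide_right_mono add_left_mono mult_right_mono) simp_all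
  also have "\<dots> \<le> eta M beta theta P N"
    unfolding T_def X_def using assms(1,2,4,5) by (intro eta_lower_bound) simp_all
  finally show ?thesis .
qed

end
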